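(* Consider the hard core model with a fixed vertex activity $\lambda>0$, let $\phi(x)=\sinh^{-1}(\sqrt x)$, so $\Phi(x)=\phi'(x)=\frac{1}{2\sqrt{x(1+x)}}$, and let $d$ be a positive integer. Let $\xi(d)=\sup_{x\ge0}\Xi(d,x)$ where $\Xi(d,x)=d\left(\frac{\Phi(f_{d,\lambda}(x))f_{d,\lambda}(x)}{(1+x)\Phi(x)}\right)^2$ and $f_{d,\lambda}(x)=\lambda/(1+x)^d$. Then the equation $d\,x=1+f_{d,\lambda}(x)$ has a unique positive solution $\tilde x_\lambda(d)$, and $\xi(d)=\Xi(d,\tilde x_\lambda(d))$. *)

theory Defs
  imports Complex_Main
begin

definition hc_phi :: "real \<Rightarrow> real" where
  "hc_phi x = arsinh (sqrt x)"

definition hc_Phi :: "real \<Rightarrow> real" where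
  "hc_Phi x = 1 / (2 * sqrt (x * (1 + x)))"

definition hc_f :: "real \<Rightarrow> nat \<Rightarrow> real \<Rightarrow> real" where
  "hc_f lam d x = lam / (1 + x) ^ d"

definition hc_Xi :: "real \<Rightarrow> nat \<Rightarrow> real \<Rightarrow> real" where
  "hc_Xi lam d x = real d * ((hc_Phi (hc_f lam d x) * hc_f lam d x) / ((1 + x) * hc_Phi x)) ^ 2"

definition hc_xi :: "real \<Rightarrow> nat \<Rightarrow> real" where
  "hc_xi lam d = (SUP x\<in>{0..}. hc_Xi lam d x)"

end

theory Submission
  imports Defs
begin

text \<open>Since (Phi(y) y)^2 = y / (4 (1 + y)), the Phi factors collapse and
  Xi(d, x) = d f/(1 + f) x/(1 + x) = d lam x / ((1 + x) ((1 + x)^d + lam)).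
  The derivative of this rational function has the sign of 1 + f(x) - d x, which is strictly
  decreasing, positive at 0 and negative for large x. Hence it has exactly one positive zero,
  and Xi increases up to that zero and decreases after it.\<close>

lemma DERIV_sign_change_imp_maximum:
  fixes g g' :: "real \<Rightarrow> real"
  assumes deriv: "\<And>t. a \<le> t \<Longrightarrow> (g has_real_derivative g' t) (at t)"
    and up: "\<And>t. a \<le> t \<Longrightarrow> t \<le> c \<Longrightarrow> 0 \<le> g' t"
    and down: "\<And>t. c \<le> t \<Longrightarrow> g' t \<le> 0"
    and "a \<le> c" "a \<le> x"
  shows "g x \<le> g c"
proof (cases "x \<le> c")
  case True
  then show ?thesis
  proof (rule DERIV_nonneg_imp_nondecreasing)
    show "\<exists>y. (g has_real_derivative y) (at t) \<and> 0 \<le> y" if "x \<le> t" "t \<le> c" for t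
      using deriv up that \<open>a \<le> x\<close> by force
  qed
next
  case False
  then have "c \<le> x" by simp
  then show ?thesis
  proof (rule DERIV_nonpos_imp_nonincreasing)
    show "\<exists>y. (g has_real_derivative y) (at t) \<and> y \<le> 0" if "c \<le> t" "t \<le> x" for t
      using that \<open>a \<le> c\<close> by (meson deriv down order.trans)
  qed
qed

lemma hc_Phi_mult_self_sq:
  assumes "0 \<le> y"
  shows "(hc_Phi y * y) ^ 2 = y / (4 * (1 + y))"
  using assms by (simp add: hc_Phi_def power_divide power_mult_distrib power2_eq_square)

definition hc_G :: "real \<Rightarrow> nat \<Rightarrow> real \<Rightarrow> real" where
  "hc_G lam d x = lam * x / ((1 + x) * ((1 + x) ^ d + lam))"

lemma hc_Xi_eq_G:
  assumes "0 \<le> lam" "0 \<le> x"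
  shows "hc_Xi lam d x = real d * hc_G lam d x"
proof (cases "x = 0")
  case True
  \<comment> \<open>both sides vanish: the junk value hc_Phi 0 = 1 / 0 = 0 kills hc_Xi\<close>
  then show ?thesis by (simp add: hc_Xi_def hc_Phi_def hc_G_def)
next
  case False
  with assms have x: "0 < x" by simp
  define F where "F = hc_f lam d x"
  have F: "0 \<le> F" "F = lam / (1 + x) ^ d" using assms by (simp_all add: F_def hc_f_def)
  have Phi_x: "((1 + x) * hc_Phi x) ^ 2 = (1 + x) / (4 * x)"
    using x by (simp add: hc_Phi_def power_divide power_mult_distrib power2_eq_square)
  have "hc_Xi lam d x = real d * ((F / (4 * (1 + F))) / ((1 + x) / (4 * x)))"
    unfolding hc_Xi_def F_def[symmetric] power_divide hc_Phi_mult_self_sq[OF F(1)] Phi_x ..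
  also have "\<dots> = real d * (F / (1 + F) * (x / (1 + x)))"
    by (simp add: field_split_simps)
  also have "\<dots> = real d * hc_G lam d x"
    using x assms by (simp add: F(2) hc_G_def field_simps add_pos_nonneg)
  finally show ?thesis .
qed

definition hc_defect :: "real \<Rightarrow> nat \<Rightarrow> real \<Rightarrow> real" where
  "hc_defect lam d x = 1 + hc_f lam d x - real d * x"

lemma hc_G_has_real_derivative:
  assumes "0 < lam" "-1 < x"
  shows "(hc_G lam d has_real_derivative
           lam * (1 + x) ^ d * hc_defect lam d x / ((1 + x) * ((1 + x) ^ d + lam)) ^ 2) (at x)"
proof -
  define D where "D = (1 + x) * ((1 + x) ^ d + lam)"
  have pos: "0 < 1 + x" "0 < (1 + x) ^ d + lam" "0 < D"
    using assms by (simp_all add: D_def add_pos_pos)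
  have "(hc_G lam d has_real_derivative
          (lam * D - lam * x * ((1 + x) ^ d + lam + real d * (1 + x) ^ (d - 1) * (1 + x))) / D ^ 2) (at x)"
    unfolding hc_G_def[abs_def] using pos
    by (auto intro!: derivative_eq_intros simp: D_def power2_eq_square)
  moreover have "real d * (1 + x) ^ (d - 1) * (1 + x) = real d * (1 + x) ^ d"
    by (cases d) simp_all
  then have "lam * D - lam * x * ((1 + x) ^ d + lam + real d * (1 + x) ^ (d - 1) * (1 + x))
      = lam * (1 + x) ^ d * hc_defect lam d x"
    using pos by (simp add: D_def hc_defect_def hc_f_def field_simps)
  ultimately show ?thesis
    by (simp add: D_def)
qed

lemma hc_f_antimono:
  assumes "0 \<le> lam" "-1 < x" "x \<le> y"
  shows "hc_f lam d y \<le> hc_f lam d x"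
  using assms unfolding hc_f_def by (intro divide_left_mono power_mono mult_pos_pos zero_less_power) auto

lemma hc_defect_strict_antimono:
  assumes "0 \<le> lam" "1 \<le> d" "-1 < x" "x < y"
  shows "hc_defect lam d y < hc_defect lam d x"
proof -
  have "real d * x < real d * y" using assms by simp
  moreover have "hc_f lam d y \<le> hc_f lam d x" using assms by (intro hc_f_antimono) auto
  ultimately show ?thesis by (simp add: hc_defect_def)
qed

lemma hc_defect_root_unique:
  assumes "0 \<le> lam" "1 \<le> d" "-1 < x" "-1 < y" "hc_defect lam d x = 0" "hc_defect lam d y = 0"
  shows "x = y"
  using hc_defect_strict_antimono[OF assms(1,2)] assms(3-) by (metis less_irrefl linorder_neqE)

lemma hc_defect_root_exists:
  assumes "0 \<le> lam" "1 \<le> d"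
  shows "\<exists>x>0. hc_defect lam d x = 0"
proof -
  define b where "b = (1 + lam) / real d"
  have "0 \<le> b" using assms by (simp add: b_def)
  have "hc_f lam d b \<le> hc_f lam d 0" using assms \<open>0 \<le> b\<close> by (intro hc_f_antimono) auto
  then have "hc_defect lam d b \<le> 0" using assms by (simp add: hc_defect_def hc_f_def b_def)
  moreover have "0 \<le> hc_defect lam d 0" using assms by (simp add: hc_defect_def hc_f_def)
  moreover have "continuous_on {0..b} (hc_defect lam d)"
    using assms unfolding hc_defect_def hc_f_def by (auto intro!: continuous_intros simp: add_pos_nonneg)
  ultimately obtain x where "0 \<le> x" "hc_defect lam d x = 0"
    using IVT2'[of "hc_defect lam d" b 0 0] \<open>0 \<le> b\<close> by auto
  moreover have "hc_defect lam d 0 \<noteq> 0" using assms by (simp add: hc_defect_def hc_f_def)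
  ultimately show ?thesis by (metis less_eq_real_def)
qed

lemma hc_G_le_at_root:
  assumes "0 < lam" "1 \<le> d" "0 \<le> r" "hc_defect lam d r = 0" "0 \<le> x"
  shows "hc_G lam d x \<le> hc_G lam d r"
proof -
  define g' where
    "g' t = lam * (1 + t) ^ d * hc_defect lam d t / ((1 + t) * ((1 + t) ^ d + lam)) ^ 2" for t
  have deriv: "(hc_G lam d has_real_derivative g' t) (at t)" if "0 \<le> t" for t
    unfolding g'_def using assms that by (intro hc_G_has_real_derivative) auto
  have "0 \<le> hc_defect lam d t" if "0 \<le> t" "t \<le> r" for t
    using hc_defect_strict_antimono[of lam d t r] assms that by (cases "t = r") auto
  then have up: "0 \<le> g' t" if "0 \<le> t" "t \<le> r" for t
    using assms that by (simp add: g'_def)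
  have "hc_defect lam d t \<le> 0" if "r \<le> t" for t
    using hc_defect_strict_antimono[of lam d r t] assms that by (cases "t = r") auto
  then have down: "g' t \<le> 0" if "r \<le> t" for t
    using assms that by (simp add: g'_def divide_nonpos_nonneg mult_nonneg_nonpos)
  show ?thesis
    using DERIV_sign_change_imp_maximum[of 0 "hc_G lam d" g' r x] deriv up down assms by simp
qed

theorem lemma4p2:
  fixes lam :: real and d :: nat
  assumes "lam > 0" and "d \<ge> 1"
  shows "(\<exists>!x. x > 0 \<and> real d * x = 1 + hc_f lam d x)
       \<and> (\<forall>x. x > 0 \<and> real d * x = 1 + hc_f lam d x \<longrightarrow> hc_xi lam d = hc_Xi lam d x)"
proof -
  have root_iff: "real d * x = 1 + hc_f lam d x \<longleftrightarrow> hc_defect lam d x = 0" for x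
    by (auto simp: hc_defect_def)
  obtain r where r: "0 < r" "hc_defect lam d r = 0"
    using hc_defect_root_exists[of lam d] assms by auto
  have unique: "x = r" if "0 < x" "hc_defect lam d x = 0" for x
    using hc_defect_root_unique[of lam d x r] assms r that by simp
  have "hc_xi lam d = hc_Xi lam d r"
    unfolding hc_xi_def
  proof (rule cSup_eq_maximum)
    show "hc_Xi lam d r \<in> hc_Xi lam d ` {0..}" using r by auto
    show "y \<le> hc_Xi lam d r" if "y \<in> hc_Xi lam d ` {0..}" for y
      using that assms r hc_G_le_at_root[of lam d r]
      by (auto simp: hc_Xi_eq_G intro!: mult_left_mono)
  qed
  then show ?thesis
    using r unique unfolding root_iff by blast
qed

end
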